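(* Let $M$ be a model. (1) For every history formula $\varphi$ of CTL*KΔ, every history $h$ and every observation record $r$ that stops at $h$: $h,r\models\varphi$ iff $\mathit{last}(h),\mathit{IS}(h,r),o(h,r)\models_I\varphi$. (2) For every path formula $\psi$, every path $\pi$, every $n\in\mathbb N$ and every observation record $r$ that stops at $n$: $\pi,n,r\models\psi$ iff $\pi_{\ge n},\ \mathit{IS}(\pi_{\le n},r),\ o(\pi_{\le n},r)\models_I\psi$.
   Context: Fix a countably infinite set $\mathit{AP}$ of atomic propositions and a finite nonempty set $\mathit{Obs}$ of observations. For a word $w$ we write $w_i$ for its letter at position $i$ (positions start at $0$), $w_{\le i}$ for its prefix ending at position $i$, $w_{\ge i}$ for its suffix starting at position $i$, $|w|$ for the length of a finite word, and $\mathit{last}(w)$ for the last letter of a finite word; $w\preceq w'$ means $w$ is a prefix of $w'$. Syntax of CTL*KΔ (single agent): history formulas $\varphi::=p\mid\neg\varphi\mid\varphi\wedge\varphi\mid\mathbf A\psi\mid\mathbf K\varphi\mid\Delta^{o}\varphi$ and path formulas $\psi::=\varphi\mid\neg\psi\mid\psi\wedge\psi\mid\mathbf X\psi\mid\psi\,\mathbf U\,\psi$, with $p\in\mathit{AP}$ and $o\in\mathit{Obs}$; the formulas of the logic are the history formulas. A model is $M=(\mathit{AP}_f,S,T,V,\{\sim_o\}_{o\in\mathit{Obs}},s_\iota,o_\iota)$ where $\mathit{AP}_f\subseteq\mathit{AP}$ is finite, $S$ is a finite set of states, $T\subseteq S\times S$ is left-total, $V:S\to 2^{\mathit{AP}_f}$,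 each $\sim_o$ is an equivalence relation on $S$, $s_\iota\in S$ and $o_\iota\in\mathit{Obs}$. A path is an infinite sequence $\pi=s_0s_1\dots$ of states with $s_i\,T\,s_{i+1}$ for all $i$ (starting at any state); a history is a finite nonempty prefix of a path. An observation record is a finite word over $\mathit{Obs}\times\mathbb N$; $\epsilon$ is the empty record, $r\cdot(o,n)$ is $r$ with $(o,n)$ appended, and $r_{=n}$ is the subword of $r$ consisting of the pairs whose second component is $n$. The record $r$ stops at $n$ if $r_{=m}$ is empty for all $m>n$, and stops at a history $h$ if it stops at $|h|-1$. The list $\mathit{ol}(r,n)$ is defined by $\mathit{ol}(r,0)=o_\iota\cdot o_1\cdots o_k$ if $r_{=0}=(o_1,0)\cdots(o_k,0)$, and $\mathit{ol}(r,n+1)=\mathit{last}(\mathit{ol}(r,n))\cdot o_1\cdots o_k$ if $r_{=n+1}=(o_1,n+1)\cdots(o_k,n+1)$. Two histories are equivalent, $h\approx_r h'$, if $|h|=|h'|$ and for every $i<|h|$ and every $o$ occurring in $\mathit{ol}(r,i)$, $h_i\sim_o h'_i$. Natural semantics: for a history $h$ and record $r$: $h,r\models p$ iff $p\in V(\mathit{last}(h))$; $h,r\models\neg\varphi$ iff not $h,r\models\varphi$; $h,r\models\varphi_1\wedge\varphi_2$ iff both hold; $h,r\models\mathbf A\psi$ iff for all paths $\pi$ with $h\preceq\pi$, $\pi,|h|-1,r\models\psi$; $h,r\models\mathbf K\varphi$ iff $h',r\models\varphi$ for all histories $h'$ with $h'\approx_r h$; $h,r\models\Delta^o\varphi$ iff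 $h,r\cdot(o,|h|-1)\models\varphi$. For a path $\pi$, $n\in\mathbb N$ and record $r$: $\pi,n,r\models\varphi$ iff $\pi_{\le n},r\models\varphi$; negation and conjunction as usual; $\pi,n,r\models\mathbf X\psi$ iff $\pi,n+1,r\models\psi$; $\pi,n,r\models\psi_1\mathbf U\psi_2$ iff there is $m\ge n$ with $\pi,m,r\models\psi_2$ and $\pi,k,r\models\psi_1$ for all $n\le k<m$. For $I\subseteq S$, $T(I)=\{s'\mid\exists s\in I,\ s\,T\,s'\}$; $[s]_o=\{s'\mid s\sim_o s'\}$. The information set is $\mathit{IS}(h,r)=\{\mathit{last}(h')\mid h'\text{ a history with }h'\approx_r h\}$. Updates: $U_T(I,s',o)=T(I)\cap[s']_o$ and $U_\Delta(I,s,o')=I\cap[s]_{o'}$. $o(h,r)$ denotes the last element of $\mathit{ol}(r,|h|-1)$. Alternative semantics, for $s\in S$, $I\subseteq S$, $o\in\mathit{Obs}$: $s,I,o\models_I p$ iff $p\in V(s)$; negation and conjunction as usual; $s,I,o\models_I\mathbf A\psi$ iff for every path $\pi$ with $\pi_0=s$, $\pi,I,o\models_I\psi$; $s,I,o\models_I\mathbf K\varphi$ iff $s',I,o\models_I\varphi$ for all $s'\in I$; $s,I,o\models_I\Delta^{o'}\varphi$ iff $s,U_\Delta(I,s,o'),o'\models_I\varphi$. For a path $\pi$: $\pi,I,o\models_I\varphi$ iff $\pi_0,I,o\models_I\varphi$; negation and conjunction as usual; $\pi,I,o\models_I\mathbf X\psi$ iff $\pi_{\ge1},U_T(I,\pi_1,o),o\models_I\psi$;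 $\pi,I,o\models_I\psi_1\mathbf U\psi_2$ iff there is $n\ge0$ with $\pi_{\ge n},U_T^n(I,\pi,o),o\models_I\psi_2$ and $\pi_{\ge m},U_T^m(I,\pi,o),o\models_I\psi_1$ for all $0\le m<n$, where $U_T^0(I,\pi,o)=I$ and $U_T^{n+1}(I,\pi,o)=U_T(U_T^n(I,\pi,o),\pi_{n+1},o)$. *)

theory Defs
  imports Main "HOL-Library.Countable"
begin

datatype ('p, 'ob) hform =
    HProp 'p
  | HNot "('p, 'ob) hform"
  | HAnd "('p, 'ob) hform" "('p, 'ob) hform"
  | HA "('p, 'ob) pform"
  | HK "('p, 'ob) hform"
  | HDelta 'ob "('p, 'ob) hform"
and ('p, 'ob) pform =
    PH "('p, 'ob) hform"
  | PNot "('p, 'ob) pform"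
  | PAnd "('p, 'ob) pform" "('p, 'ob) pform"
  | PX "('p, 'ob) pform"
  | PU "('p, 'ob) pform" "('p, 'ob) pform"

text \<open>States form a finite type 's (S = UNIV), observations a finite type 'ob.\<close>

record ('p, 's, 'ob) model =
  APf :: "'p set"
  Trans :: "'s \<Rightarrow> 's \<Rightarrow> bool"
  Val :: "'s \<Rightarrow> 'p set"
  Eqv :: "'ob \<Rightarrow> 's \<Rightarrow> 's \<Rightarrow> bool"
  sinit :: 's
  oinit :: 'ob

definition is_model :: "('p, 's::finite, 'ob::finite) model \<Rightarrow> bool" where
  "is_model M \<longleftrightarrow> finite (APf M)
     \<and> (\<forall>s. \<exists>s'. Trans M s s')
     \<and> (\<forall>s. Val M s \<subseteq> APf M)
     \<and> (\<forall>ob. equivp (Eqv M ob))"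

definition is_path :: "('p, 's, 'ob) model \<Rightarrow> (nat \<Rightarrow> 's) \<Rightarrow> bool" where
  "is_path M \<pi> \<longleftrightarrow> (\<forall>i. Trans M (\<pi> i) (\<pi> (Suc i)))"

text \<open>Histories: finite nonempty prefixes of paths; since T is left-total these are
  exactly the nonempty lists whose consecutive elements are T-related.\<close>
definition is_history :: "('p, 's, 'ob) model \<Rightarrow> 's list \<Rightarrow> bool" where
  "is_history M h \<longleftrightarrow> (\<exists>\<pi>. is_path M \<pi> \<and> (\<exists>n. h = map \<pi> [0..<Suc n]))"

definition prefix_of :: "'s list \<Rightarrow> (nat \<Rightarrow> 's) \<Rightarrow> bool" where
  "prefix_of h \<pi> \<longleftrightarrow> (\<forall>i < length h. \<pi> i = h ! i)"

definition upto_pref :: "(nat \<Rightarrow> 's) \<Rightarrow> nat \<Rightarrow> 's list" where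
  "upto_pref \<pi> n = map \<pi> [0..<Suc n]"

definition suffix_from :: "(nat \<Rightarrow> 's) \<Rightarrow> nat \<Rightarrow> (nat \<Rightarrow> 's)" where
  "suffix_from \<pi> n = (\<lambda>i. \<pi> (n + i))"

type_synonym 'ob record_t = "('ob \<times> nat) list"

definition rec_at :: "'ob record_t \<Rightarrow> nat \<Rightarrow> 'ob record_t" where
  "rec_at r n = filter (\<lambda>p. snd p = n) r"

definition stops_at :: "'ob record_t \<Rightarrow> nat \<Rightarrow> bool" where
  "stops_at r n \<longleftrightarrow> (\<forall>m > n. rec_at r m = [])"

definition stops_at_hist :: "'ob record_t \<Rightarrow> 's list \<Rightarrow> bool" where
  "stops_at_hist r h \<longleftrightarrow> stops_at r (length h - 1)"

fun ol :: "('p, 's, 'ob) model \<Rightarrow> 'ob record_t \<Rightarrow> nat \<Rightarrow> 'ob list" where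
  "ol M r 0 = oinit M # map fst (rec_at r 0)"
| "ol M r (Suc n) = last (ol M r n) # map fst (rec_at r (Suc n))"

definition hequiv :: "('p, 's, 'ob) model \<Rightarrow> 'ob record_t \<Rightarrow> 's list \<Rightarrow> 's list \<Rightarrow> bool" where
  "hequiv M r h h' \<longleftrightarrow> length h = length h'
     \<and> (\<forall>i < length h. \<forall>ob \<in> set (ol M r i). Eqv M ob (h ! i) (h' ! i))"

definition IS :: "('p, 's, 'ob) model \<Rightarrow> 's list \<Rightarrow> 'ob record_t \<Rightarrow> 's set" where
  "IS M h r = {last h' | h'. is_history M h' \<and> hequiv M r h' h}"

definition obs_of :: "('p, 's, 'ob) model \<Rightarrow> 's list \<Rightarrow> 'ob record_t \<Rightarrow> 'ob" where
  "obs_of M h r = last (ol M r (length h - 1))"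

primrec hsat :: "('p, 's, 'ob) model \<Rightarrow> ('p, 'ob) hform \<Rightarrow> 's list \<Rightarrow> 'ob record_t \<Rightarrow> bool"
and psat :: "('p, 's, 'ob) model \<Rightarrow> ('p, 'ob) pform \<Rightarrow> (nat \<Rightarrow> 's) \<Rightarrow> nat \<Rightarrow> 'ob record_t \<Rightarrow> bool"
where
  "hsat M (HProp p) h r = (p \<in> Val M (last h))"
| "hsat M (HNot \<phi>) h r = (\<not> hsat M \<phi> h r)"
| "hsat M (HAnd \<phi>1 \<phi>2) h r = (hsat M \<phi>1 h r \<and> hsat M \<phi>2 h r)"
| "hsat M (HA \<psi>) h r = (\<forall>\<pi>. is_path M \<pi> \<and> prefix_of h \<pi> \<longrightarrow> psat M \<psi> \<pi> (length h - 1) r)"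
| "hsat M (HK \<phi>) h r = (\<forall>h'. is_history M h' \<and> hequiv M r h' h \<longrightarrow> hsat M \<phi> h' r)"
| "hsat M (HDelta ob \<phi>) h r = hsat M \<phi> h (r @ [(ob, length h - 1)])"
| "psat M (PH \<phi>) \<pi> n r = hsat M \<phi> (upto_pref \<pi> n) r"
| "psat M (PNot \<psi>) \<pi> n r = (\<not> psat M \<psi> \<pi> n r)"
| "psat M (PAnd \<psi>1 \<psi>2) \<pi> n r = (psat M \<psi>1 \<pi> n r \<and> psat M \<psi>2 \<pi> n r)"
| "psat M (PX \<psi>) \<pi> n r = psat M \<psi> \<pi> (Suc n) r"
| "psat M (PU \<psi>1 \<psi>2) \<pi> n r =
     (\<exists>m \<ge> n. psat M \<psi>2 \<pi> m r \<and> (\<forall>k. n \<le> k \<and> k < m \<longrightarrow> psat M \<psi>1 \<pi> k r))"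

definition Timg :: "('p, 's, 'ob) model \<Rightarrow> 's set \<Rightarrow> 's set" where
  "Timg M I = {s'. \<exists>s \<in> I. Trans M s s'}"

definition eqcls :: "('p, 's, 'ob) model \<Rightarrow> 's \<Rightarrow> 'ob \<Rightarrow> 's set" where
  "eqcls M s ob = {s'. Eqv M ob s s'}"

definition UT :: "('p, 's, 'ob) model \<Rightarrow> 's set \<Rightarrow> 's \<Rightarrow> 'ob \<Rightarrow> 's set" where
  "UT M I s' ob = Timg M I \<inter> eqcls M s' ob"

definition UD :: "('p, 's, 'ob) model \<Rightarrow> 's set \<Rightarrow> 's \<Rightarrow> 'ob \<Rightarrow> 's set" where
  "UD M I s ob' = I \<inter> eqcls M s ob'"

fun UTn :: "('p, 's, 'ob) model \<Rightarrow> nat \<Rightarrow> 's set \<Rightarrow> (nat \<Rightarrow> 's) \<Rightarrow> 'ob \<Rightarrow> 's set" where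
  "UTn M 0 I \<pi> ob = I"
| "UTn M (Suc n) I \<pi> ob = UT M (UTn M n I \<pi> ob) (\<pi> (Suc n)) ob"

primrec isat :: "('p, 's, 'ob) model \<Rightarrow> ('p, 'ob) hform \<Rightarrow> 's \<Rightarrow> 's set \<Rightarrow> 'ob \<Rightarrow> bool"
and ipsat :: "('p, 's, 'ob) model \<Rightarrow> ('p, 'ob) pform \<Rightarrow> (nat \<Rightarrow> 's) \<Rightarrow> 's set \<Rightarrow> 'ob \<Rightarrow> bool"
where
  "isat M (HProp p) s I ob = (p \<in> Val M s)"
| "isat M (HNot \<phi>) s I ob = (\<not> isat M \<phi> s I ob)"
| "isat M (HAnd \<phi>1 \<phi>2) s I ob = (isat M \<phi>1 s I ob \<and> isat M \<phi>2 s I ob)"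
| "isat M (HA \<psi>) s I ob = (\<forall>\<pi>. is_path M \<pi> \<and> \<pi> 0 = s \<longrightarrow> ipsat M \<psi> \<pi> I ob)"
| "isat M (HK \<phi>) s I ob = (\<forall>s' \<in> I. isat M \<phi> s' I ob)"
| "isat M (HDelta ob' \<phi>) s I ob = isat M \<phi> s (UD M I s ob') ob'"
| "ipsat M (PH \<phi>) \<pi> I ob = isat M \<phi> (\<pi> 0) I ob"
| "ipsat M (PNot \<psi>) \<pi> I ob = (\<not> ipsat M \<psi> \<pi> I ob)"
| "ipsat M (PAnd \<psi>1 \<psi>2) \<pi> I ob = (ipsat M \<psi>1 \<pi> I ob \<and> ipsat M \<psi>2 \<pi> I ob)"
| "ipsat M (PX \<psi>) \<pi> I ob = ipsat M \<psi> (suffix_from \<pi> 1) (UT M I (\<pi> 1) ob) ob"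
| "ipsat M (PU \<psi>1 \<psi>2) \<pi> I ob =
     (\<exists>n. ipsat M \<psi>2 (suffix_from \<pi> n) (UTn M n I \<pi> ob) ob
        \<and> (\<forall>m < n. ipsat M \<psi>1 (suffix_from \<pi> m) (UTn M m I \<pi> ob) ob))"

end

theory Submission
  imports Defs
begin

text \<open>
  Recording a new observation \<open>o'\<close> at the end of \<open>h\<close> intersects
  \<open>IS(h,r)\<close> with the \<open>o'\<close>-class of \<open>last h\<close>, which is \<open>U\<^sub>\<Delta>\<close>. Extending \<open>h\<close> by a state \<open>s\<close>
  under a record that stops at \<open>h\<close> keeps the observation and turns \<open>IS(h,r)\<close> into
  \<open>T(IS(h,r)) \<inter> [s]\<^sub>o\<close>, which is \<open>U\<^sub>T\<close>; iterating this handles \<open>X\<close> and \<open>U\<close>. For \<open>A\<close>, the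
  paths through \<open>h\<close> correspond to the paths from \<open>last h\<close> by taking suffixes, and for \<open>K\<close>, all
  histories equivalent to \<open>h\<close> have the same information set.
\<close>

lemma successively_iff_nth:
  "successively P xs \<longleftrightarrow> (\<forall>i. Suc i < length xs \<longrightarrow> P (xs ! i) (xs ! Suc i))"
proof (induction xs)
  case (Cons x xs)
  then show ?case
    by (cases xs) (auto simp: successively_Cons nth_Cons split: nat.splits)
qed simp

lemma upto_pref_length [simp]: "length (upto_pref \<pi> n) = Suc n"
  by (simp add: upto_pref_def del: upt_Suc)

lemma upto_pref_nth [simp]: "i \<le> n \<Longrightarrow> upto_pref \<pi> n ! i = \<pi> i"
  by (simp add: upto_pref_def nth_map_upt del: upt_Suc)

lemma upto_pref_last [simp]: "last (upto_pref \<pi> n) = \<pi> n"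
  by (simp add: upto_pref_def)

lemma upto_pref_Suc: "upto_pref \<pi> (Suc n) = upto_pref \<pi> n @ [\<pi> (Suc n)]"
  by (simp add: upto_pref_def)

lemma upto_pref_neq_Nil [simp]: "upto_pref \<pi> n \<noteq> []"
  by (simp add: upto_pref_def)

lemma upto_pref_eq_iff_prefix_of:
  assumes "h \<noteq> []"
  shows "upto_pref \<pi> (length h - 1) = h \<longleftrightarrow> prefix_of h \<pi>"
proof -
  have len: "length (upto_pref \<pi> (length h - 1)) = length h"
    using assms by simp
  have nth: "upto_pref \<pi> (length h - 1) ! i = \<pi> i" if "i < length h" for i
    using that by simp
  show ?thesis
    unfolding list_eq_iff_nth_eq prefix_of_def len by (simp add: nth)
qed

lemma suffix_from_suffix_from [simp]:
  "suffix_from (suffix_from \<pi> n) m = suffix_from \<pi> (n + m)"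
  by (simp add: suffix_from_def add.assoc)

lemma suffix_from_0 [simp]: "suffix_from \<pi> n 0 = \<pi> n"
  by (simp add: suffix_from_def)

lemma is_path_suffix_from: "is_path M \<pi> \<Longrightarrow> is_path M (suffix_from \<pi> n)"
  by (simp add: is_path_def suffix_from_def)

lemma is_history_neq_Nil: "is_history M h \<Longrightarrow> h \<noteq> []"
  by (auto simp: is_history_def simp del: upt_Suc)

lemma is_history_upto_pref: "is_path M \<pi> \<Longrightarrow> is_history M (upto_pref \<pi> n)"
  unfolding is_history_def upto_pref_def by blast

lemma ex_path_from:
  assumes "\<forall>s. \<exists>s'. Trans M s s'"
  shows "\<exists>\<pi>. is_path M \<pi> \<and> \<pi> 0 = s"
proof -
  define next_state where "next_state s = (SOME s'. Trans M s s')" for s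
  have "Trans M s (next_state s)" for s
    unfolding next_state_def using assms by (blast intro: someI_ex)
  then show ?thesis
    by (intro exI[of _ "\<lambda>k. (next_state ^^ k) s"]) (simp add: is_path_def)
qed

definition extend_history :: "'s list \<Rightarrow> (nat \<Rightarrow> 's) \<Rightarrow> nat \<Rightarrow> 's" where
  "extend_history h p i = (if i < length h - 1 then h ! i else p (i - (length h - 1)))"

lemma suffix_from_extend_history: "suffix_from (extend_history h p) (length h - 1) = p"
  by (simp add: suffix_from_def extend_history_def)

lemma prefix_of_extend_history:
  assumes "h \<noteq> []" "p 0 = last h"
  shows "prefix_of h (extend_history h p)"
  unfolding prefix_of_def
proof (intro allI impI)
  fix i
  assume "i < length h"
  then consider "i < length h - 1" | "i = length h - 1" by linarith
  then show "extend_history h p i = h ! i"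
  proof cases
    case 2
    then have "extend_history h p i = p 0" by (simp add: extend_history_def)
    then show ?thesis using 2 assms by (simp add: last_conv_nth)
  qed (simp add: extend_history_def)
qed

lemma is_path_extend_history:
  assumes "successively (Trans M) h" "is_path M p" "h \<noteq> []" "p 0 = last h"
  shows "is_path M (extend_history h p)"
  unfolding is_path_def
proof
  fix i
  have step: "Trans M (h ! i) (h ! Suc i)" if "Suc i < length h"
    using assms(1) that successively_iff_nth by blast
  consider "Suc i < length h - 1" | "Suc i = length h - 1" | "length h - 1 \<le> i" by linarith
  then show "Trans M (extend_history h p i) (extend_history h p (Suc i))"
  proof cases
    case 1
    then show ?thesis using step by (simp add: extend_history_def)
  next
    case 2
    then have "extend_history h p i = h ! i" "extend_history h p (Suc i) = h ! Suc i"
      using assms(3,4) by (simp_all add: extend_history_def last_conv_nth)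
    moreover have "Suc i < length h" using 2 assms(3) by simp
    ultimately show ?thesis using step by simp
  next
    case 3
    then have "extend_history h p i = p (i - (length h - 1))"
      "extend_history h p (Suc i) = p (Suc (i - (length h - 1)))"
      by (simp_all add: extend_history_def Suc_diff_le)
    then show ?thesis using assms(2) by (simp add: is_path_def)
  qed
qed

lemma is_history_iff:
  assumes "\<forall>s. \<exists>s'. Trans M s s'"
  shows "is_history M h \<longleftrightarrow> h \<noteq> [] \<and> successively (Trans M) h"
proof
  assume "is_history M h"
  then obtain \<pi> n where "is_path M \<pi>" "h = map \<pi> [0..<Suc n]"
    unfolding is_history_def by blast
  then show "h \<noteq> [] \<and> successively (Trans M) h"
    by (simp add: successively_map successively_iff_nth is_path_def del: upt_Suc)
next
  assume h: "h \<noteq> [] \<and> successively (Trans M) h"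
  obtain p where "is_path M p" "p 0 = last h"
    using ex_path_from[OF assms] by blast
  then have path: "is_path M (extend_history h p)"
    and prefix: "prefix_of h (extend_history h p)"
    using h is_path_extend_history prefix_of_extend_history by blast+
  have "upto_pref (extend_history h p) (length h - 1) = h"
    using prefix h upto_pref_eq_iff_prefix_of by blast
  then have "h = map (extend_history h p) [0..<Suc (length h - 1)]"
    unfolding upto_pref_def by (rule sym)
  with path show "is_history M h"
    unfolding is_history_def by blast
qed

lemma paths_through_history:
  assumes "h \<noteq> []" "successively (Trans M) h"
  shows "(\<lambda>\<pi>. suffix_from \<pi> (length h - 1)) ` {\<pi>. is_path M \<pi> \<and> prefix_of h \<pi>}
       = {p. is_path M p \<and> p 0 = last h}"
proof (intro equalityI subsetI)
  fix p
  assume "p \<in> (\<lambda>\<pi>. suffix_from \<pi> (length h - 1)) ` {\<pi>. is_path M \<pi> \<and> prefix_of h \<pi>}"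
  then obtain \<pi> where "is_path M \<pi>" "prefix_of h \<pi>" "p = suffix_from \<pi> (length h - 1)"
    by blast
  then show "p \<in> {p. is_path M p \<and> p 0 = last h}"
    using assms(1) by (simp add: is_path_suffix_from prefix_of_def last_conv_nth)
next
  fix p
  assume "p \<in> {p. is_path M p \<and> p 0 = last h}"
  then show "p \<in> (\<lambda>\<pi>. suffix_from \<pi> (length h - 1)) ` {\<pi>. is_path M \<pi> \<and> prefix_of h \<pi>}"
    using assms is_path_extend_history prefix_of_extend_history suffix_from_extend_history
    by (metis (mono_tags, lifting) image_eqI mem_Collect_eq)
qed

lemma rec_at_snoc:
  "rec_at (r @ [(ob, n)]) i = rec_at r i @ (if i = n then [(ob, n)] else [])"
  by (simp add: rec_at_def)

lemma ol_snoc: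
  "i \<le> n \<Longrightarrow> ol M (r @ [(ob, n)]) i = (if i = n then ol M r i @ [ob] else ol M r i)"
  by (induction i) (auto simp: rec_at_snoc)

lemma ol_Suc_if_stops_at: "stops_at r n \<Longrightarrow> ol M r (Suc n) = [last (ol M r n)]"
  by (simp add: stops_at_def)

lemma stops_at_snoc: "stops_at r n \<Longrightarrow> stops_at (r @ [(ob, n)]) n"
  by (simp add: stops_at_def rec_at_snoc)

lemma stops_at_mono: "stops_at r n \<Longrightarrow> n \<le> m \<Longrightarrow> stops_at r m"
  by (simp add: stops_at_def)

lemma stops_at_hist_upto_pref [simp]: "stops_at_hist r (upto_pref \<pi> n) \<longleftrightarrow> stops_at r n"
  by (simp add: stops_at_hist_def)

lemma equivp_hequiv:
  assumes "is_model M"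
  shows "equivp (hequiv M r)"
proof (rule equivpI)
  have "equivp (Eqv M ob)" for ob
    using assms by (simp add: is_model_def)
  then show "reflp (hequiv M r)" "symp (hequiv M r)" "transp (hequiv M r)"
    unfolding hequiv_def reflp_def symp_def transp_def
    by (metis equivp_reflp equivp_symp equivp_transp)+
qed

lemma hequiv_length: "hequiv M r g h \<Longrightarrow> length g = length h"
  by (simp add: hequiv_def)

lemma IS_cong:
  assumes "is_model M" "hequiv M r h' h"
  shows "IS M h' r = IS M h r"
  using equivp_hequiv[OF assms(1)] assms(2) unfolding IS_def
  by (metis equivp_symp equivp_transp)

lemma hequiv_snoc:
  assumes "length g = length h"
  shows "hequiv M r (g @ [s]) (h @ [t]) \<longleftrightarrow>
         hequiv M r g h \<and> (\<forall>ob \<in> set (ol M r (length h)). Eqv M ob s t)"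
  using assms by (auto simp: hequiv_def nth_append All_less_Suc)

lemma hequiv_snoc_record:
  assumes "h \<noteq> []"
  shows "hequiv M (r @ [(ob, length h - 1)]) g h \<longleftrightarrow>
         hequiv M r g h \<and> Eqv M ob (last g) (last h)"
proof -
  obtain n where n: "length h = Suc n"
    using assms by (cases h) auto
  have ol: "set (ol M (r @ [(ob, n)]) i) = set (ol M r i) \<union> (if i = n then {ob} else {})"
    if "i \<le> n" for i
    using that by (simp add: ol_snoc)
  have last: "last xs = xs ! n" if "length xs = Suc n" for xs :: "'s list"
    using that by (cases xs rule: rev_cases) (auto simp: nth_append)
  show ?thesis
    using n last[of h] last[of g] by (auto simp: hequiv_def All_less_Suc ol less_Suc_eq)
qed

lemma IS_snoc_record:
  assumes "is_model M" "h \<noteq> []"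
  shows "IS M h (r @ [(ob, length h - 1)]) = UD M (IS M h r) (last h) ob"
proof -
  have "equivp (Eqv M ob)"
    using assms(1) by (simp add: is_model_def)
  then show ?thesis
    unfolding IS_def UD_def eqcls_def hequiv_snoc_record[OF assms(2)]
    by (auto dest: equivp_symp)
qed

lemma obs_of_snoc_record: "h \<noteq> [] \<Longrightarrow> obs_of M h (r @ [(ob, length h - 1)]) = ob"
  by (simp add: obs_of_def ol_snoc)

lemma obs_of_snoc:
  assumes "h \<noteq> []" "stops_at_hist r h"
  shows "obs_of M (h @ [t]) r = obs_of M h r"
  using assms ol_Suc_if_stops_at[of r "length h - 1" M]
  by (simp add: obs_of_def stops_at_hist_def)

lemma is_history_snoc:
  assumes "is_model M" "g \<noteq> []"
  shows "is_history M (g @ [x]) \<longleftrightarrow> is_history M g \<and> Trans M (last g) x"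
proof -
  have "\<forall>s. \<exists>s'. Trans M s s'"
    using assms(1) by (simp add: is_model_def)
  then show ?thesis
    using assms(2) by (simp add: is_history_iff successively_append_iff)
qed

lemma mem_IS_snoc_iff:
  "x \<in> IS M (h @ [t]) r \<longleftrightarrow>
   (\<exists>g. length g = length h \<and> is_history M (g @ [x]) \<and> hequiv M r (g @ [x]) (h @ [t]))"
proof
  assume "x \<in> IS M (h @ [t]) r"
  then obtain h' where h': "x = last h'" "is_history M h'" "hequiv M r h' (h @ [t])"
    unfolding IS_def by blast
  then obtain g y where "h' = g @ [y]" "length g = length h"
    using hequiv_length length_Suc_conv_rev by (metis length_append_singleton)
  with h' show "\<exists>g. length g = length h \<and> is_history M (g @ [x]) \<and> hequiv M r (g @ [x]) (h @ [t])"
    by auto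
qed (metis (mono_tags, lifting) IS_def last_snoc mem_Collect_eq)

lemma IS_snoc:
  assumes "is_model M" "h \<noteq> []" "stops_at_hist r h"
  shows "IS M (h @ [t]) r = UT M (IS M h r) t (obs_of M h r)"
proof -
  let ?o = "obs_of M h r"
  have "equivp (Eqv M ?o)"
    using assms(1) by (simp add: is_model_def)
  have ol: "set (ol M r (length h)) = {?o}"
    using assms(2,3) ol_Suc_if_stops_at[of r "length h - 1" M]
    by (simp add: obs_of_def stops_at_hist_def)
  have "x \<in> IS M (h @ [t]) r \<longleftrightarrow>
        (\<exists>g. is_history M g \<and> hequiv M r g h \<and> Trans M (last g) x \<and> Eqv M ?o x t)" for x
  proof -
    have "is_history M (g @ [x]) \<and> hequiv M r (g @ [x]) (h @ [t]) \<longleftrightarrow>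
          is_history M g \<and> hequiv M r g h \<and> Trans M (last g) x \<and> Eqv M ?o x t"
      if "length g = length h" for g
    proof -
      have "g \<noteq> []"
        using that assms(2) by auto
      then show ?thesis
        using that by (simp add: is_history_snoc[OF assms(1)] hequiv_snoc ol) blast
    qed
    then show ?thesis
      unfolding mem_IS_snoc_iff using hequiv_length by blast
  qed
  then show ?thesis
    unfolding IS_def UT_def Timg_def eqcls_def
    using \<open>equivp (Eqv M ?o)\<close> by (auto dest: equivp_symp)
qed

lemma obs_of_upto_pref_add:
  assumes "stops_at r n"
  shows "obs_of M (upto_pref \<pi> (n + m)) r = obs_of M (upto_pref \<pi> n) r"
proof (induction m)
  case (Suc m)
  have "stops_at r (n + m)"
    using stops_at_mono[OF assms] by simp
  then show ?case
    using Suc obs_of_snoc[of "upto_pref \<pi> (n + m)" r M] by (simp add: upto_pref_Suc)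
qed simp

lemma IS_upto_pref_add:
  assumes "is_model M" "stops_at r n"
  shows "IS M (upto_pref \<pi> (n + m)) r =
         UTn M m (IS M (upto_pref \<pi> n) r) (suffix_from \<pi> n) (obs_of M (upto_pref \<pi> n) r)"
proof (induction m)
  case (Suc m)
  have "stops_at r (n + m)"
    using stops_at_mono[OF assms(2)] by simp
  then show ?case
    using Suc IS_snoc[OF assms(1), of "upto_pref \<pi> (n + m)" r]
      obs_of_upto_pref_add[OF assms(2), of M \<pi> m]
    by (simp add: upto_pref_Suc suffix_from_def)
qed simp

lemma ex_ge_iff_ex_add:
  "(\<exists>m \<ge> (n::nat). P m \<and> (\<forall>k. n \<le> k \<and> k < m \<longrightarrow> Q k)) \<longleftrightarrow>
   (\<exists>m. P (n + m) \<and> (\<forall>k < m. Q (n + k)))"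
proof
  assume "\<exists>m \<ge> n. P m \<and> (\<forall>k. n \<le> k \<and> k < m \<longrightarrow> Q k)"
  then obtain m where "n \<le> m" "P m" "\<forall>k. n \<le> k \<and> k < m \<longrightarrow> Q k"
    by blast
  then show "\<exists>m. P (n + m) \<and> (\<forall>k < m. Q (n + k))"
    by (intro exI[of _ "m - n"]) auto
next
  assume "\<exists>m. P (n + m) \<and> (\<forall>k < m. Q (n + k))"
  then obtain m where "P (n + m)" "\<forall>k < m. Q (n + k)"
    by blast
  then show "\<exists>m \<ge> n. P m \<and> (\<forall>k. n \<le> k \<and> k < m \<longrightarrow> Q k)"
    by (intro exI[of _ "n + m"]) (metis le_add1 le_add_diff_inverse nat_add_left_cancel_less)
qed

lemma hsat_iff_isat_and_psat_iff_ipsat: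
  assumes "is_model M"
  shows hsat_iff_isat: "is_history M h \<Longrightarrow> stops_at_hist r h \<Longrightarrow>
           hsat M \<phi> h r \<longleftrightarrow> isat M \<phi> (last h) (IS M h r) (obs_of M h r)"
    and psat_iff_ipsat: "is_path M \<pi> \<Longrightarrow> stops_at r n \<Longrightarrow>
           psat M \<psi> \<pi> n r \<longleftrightarrow>
           ipsat M \<psi> (suffix_from \<pi> n) (IS M (upto_pref \<pi> n) r) (obs_of M (upto_pref \<pi> n) r)"
proof (induction \<phi> and \<psi> arbitrary: h r and \<pi> n r)
  case (HA \<psi>)
  let ?n = "length h - 1"
  have h: "h \<noteq> []" "successively (Trans M) h"
    using HA.prems(1) assms by (simp_all add: is_history_iff is_model_def)
  have "psat M \<psi> \<pi> ?n r \<longleftrightarrow> ipsat M \<psi> (suffix_from \<pi> ?n) (IS M h r) (obs_of M h r)"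
    if "is_path M \<pi>" "prefix_of h \<pi>" for \<pi>
  proof -
    have "upto_pref \<pi> ?n = h"
      using that(2) upto_pref_eq_iff_prefix_of[OF h(1)] by blast
    then show ?thesis
      using HA.IH[OF that(1)] HA.prems(2) by (simp add: stops_at_hist_def)
  qed
  then have "hsat M (HA \<psi>) h r \<longleftrightarrow>
        (\<forall>\<pi> \<in> {\<pi>. is_path M \<pi> \<and> prefix_of h \<pi>}.
           ipsat M \<psi> (suffix_from \<pi> ?n) (IS M h r) (obs_of M h r))"
    by auto
  also have "\<dots> \<longleftrightarrow>
        (\<forall>p \<in> {p. is_path M p \<and> p 0 = last h}. ipsat M \<psi> p (IS M h r) (obs_of M h r))"
    unfolding paths_through_history[OF h, symmetric] by simp
  finally show ?case
    by simp
next
  case (HK \<phi>)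
  have "hsat M \<phi> g r \<longleftrightarrow> isat M \<phi> (last g) (IS M h r) (obs_of M h r)"
    if "is_history M g" "hequiv M r g h" for g
    using HK.IH[OF that(1)] HK.prems(2) IS_cong[OF assms that(2)] hequiv_length[OF that(2)]
    by (simp add: stops_at_hist_def obs_of_def)
  then show ?case
    by (auto simp: IS_def)
next
  case (HDelta ob \<phi>)
  have h: "h \<noteq> []"
    using is_history_neq_Nil[OF HDelta.prems(1)] .
  have "stops_at_hist (r @ [(ob, length h - 1)]) h"
    using HDelta.prems(2) by (simp add: stops_at_hist_def stops_at_snoc)
  then show ?case
    by (simp only: hsat.simps isat.simps HDelta.IH[OF HDelta.prems(1)]
        IS_snoc_record[OF assms h] obs_of_snoc_record[OF h])
next
  case (PH \<phi>)
  then show ?case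
    by (simp add: is_history_upto_pref)
next
  case (PX \<psi>)
  have "stops_at r (n + 1)"
    using stops_at_mono[OF PX.prems(2)] by simp
  then show ?case
    using PX.IH[OF PX.prems(1)] IS_upto_pref_add[OF assms PX.prems(2), of \<pi> 1]
      obs_of_upto_pref_add[OF PX.prems(2), of M \<pi> 1]
    by (simp add: suffix_from_def)
next
  case (PU \<psi>1 \<psi>2)
  let ?I = "IS M (upto_pref \<pi> n) r" and ?o = "obs_of M (upto_pref \<pi> n) r"
  have "stops_at r (n + k)" for k
    using stops_at_mono[OF PU.prems(2)] by simp
  then have "psat M \<psi>1 \<pi> (n + k) r \<longleftrightarrow>
             ipsat M \<psi>1 (suffix_from \<pi> (n + k)) (UTn M k ?I (suffix_from \<pi> n) ?o) ?o"
    and "psat M \<psi>2 \<pi> (n + k) r \<longleftrightarrow>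
             ipsat M \<psi>2 (suffix_from \<pi> (n + k)) (UTn M k ?I (suffix_from \<pi> n) ?o) ?o"
    for k
    using PU.IH[OF PU.prems(1)] IS_upto_pref_add[OF assms PU.prems(2), of \<pi> k]
      obs_of_upto_pref_add[OF PU.prems(2), of M \<pi> k]
    by simp_all
  then show ?case
    unfolding psat.simps ipsat.simps ex_ge_iff_ex_add suffix_from_suffix_from by simp
qed simp_all

theorem mainTheorem3:
  fixes M :: "('p::countable, 's::finite, 'o::finite) model"
  assumes "infinite (UNIV :: 'p set)"
    and "is_model M"
  shows "(\<forall>(\<phi> :: ('p, 'o) hform) h r. is_history M h \<and> stops_at_hist r h \<longrightarrow>
            (hsat M \<phi> h r \<longleftrightarrow> isat M \<phi> (last h) (IS M h r) (obs_of M h r)))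
       \<and> (\<forall>(\<psi> :: ('p, 'o) pform) \<pi> n r. is_path M \<pi> \<and> stops_at r n \<longrightarrow>
            (psat M \<psi> \<pi> n r \<longleftrightarrow>
             ipsat M \<psi> (suffix_from \<pi> n) (IS M (upto_pref \<pi> n) r) (obs_of M (upto_pref \<pi> n) r)))"
  using hsat_iff_isat[OF assms(2)] psat_iff_ipsat[OF assms(2)] by blast

end
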